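(* For all $\varepsilon>0$ and $\delta\in[0,1)$, if $P$ and $Q$ are $(\varepsilon,\delta)$-indistinguishable probability distributions, then \[ B(P,Q)\le \ln\Big(\frac{e^{\varepsilon/2}+e^{-\varepsilon/2}}{2}\Big)+\ln\Big(\frac1{1-\delta}\Big)\le\min\Big\{\frac{\varepsilon^2}{8},\frac{\varepsilon}{2}\Big\}+\frac{\delta}{1-\delta}. \]
   Context: Distributions $P,Q$ (on a common space) are $(\varepsilon,\delta)$-indistinguishable if for every event $Y$, $P(Y)\le e^\varepsilon Q(Y)+\delta$ and $Q(Y)\le e^\varepsilon P(Y)+\delta$. The Bhattacharyya coefficient is $\mathrm{BC}(P\|Q)=\int\sqrt{P(x)Q(x)}\,dx$ (densities w.r.t. a common dominating measure) and the Bhattacharyya distance is $B(P,Q)=-\ln\mathrm{BC}(P\|Q)$. *)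

theory Defs
  imports "HOL-Probability.Probability"
begin

definition indist :: "real \<Rightarrow> real \<Rightarrow> 'a measure \<Rightarrow> 'a measure \<Rightarrow> bool" where
  "indist \<epsilon> \<delta> P Q \<longleftrightarrow> sets P = sets Q \<and>
     (\<forall>Y \<in> sets P. measure P Y \<le> exp \<epsilon> * measure Q Y + \<delta> \<and>
                    measure Q Y \<le> exp \<epsilon> * measure P Y + \<delta>)"

definition bhatt_coeff :: "'a measure \<Rightarrow> ('a \<Rightarrow> real) \<Rightarrow> ('a \<Rightarrow> real) \<Rightarrow> real" where
  "bhatt_coeff M p q = (\<integral>x. sqrt (p x * q x) \<partial>M)"

definition bhatt_dist :: "'a measure \<Rightarrow> ('a \<Rightarrow> real) \<Rightarrow> ('a \<Rightarrow> real) \<Rightarrow> real" where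
  "bhatt_dist M p q = - ln (bhatt_coeff M p q)"

end

theory Submission
  imports Defs
begin

text \<open>Let \<open>c = exp \<epsilon>\<close>. Indistinguishability bounds the excess mass \<open>\<integral>(p - c q)\<^sup>+\<close> by \<open>\<delta>\<close>,
  so \<open>\<integral> min p (c q) \<ge> 1 - \<delta>\<close>, and symmetrically for \<open>\<integral> min q (c p)\<close>. Pointwise,
  \<open>min a (c b) + min b (c a) \<le> 2 cosh (\<epsilon>/2) \<surd>(a b)\<close>, so integrating gives
  \<open>BC \<ge> (1 - \<delta>) / cosh (\<epsilon>/2)\<close>. The numerical bounds follow from
  \<open>ln cosh t \<le> min (t\<^sup>2/2) \<bar>t\<bar>\<close> and \<open>ln x \<le> x - 1\<close>.\<close>

lemma min_add_min_le_mult: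
  fixes s t u :: real
  assumes "0 \<le> s" "0 \<le> t" "0 < u"
  shows "min (s\<^sup>2) (u\<^sup>2 * t\<^sup>2) + min (t\<^sup>2) (u\<^sup>2 * s\<^sup>2) \<le> (u + 1 / u) * (s * t)"
proof -
  have dominated: "u * (min (s\<^sup>2) (u\<^sup>2 * t\<^sup>2) + min (t\<^sup>2) (u\<^sup>2 * s\<^sup>2)) \<le> (u\<^sup>2 + 1) * (s * t)"
    if "0 \<le> t" "u * t \<le> s" for s t :: real
  proof -
    have "(u * t)\<^sup>2 \<le> s\<^sup>2" using power_mono[OF that(2)] that(1) assms(3) by simp
    then have "min (s\<^sup>2) (u\<^sup>2 * t\<^sup>2) = u\<^sup>2 * t\<^sup>2" by (simp add: power_mult_distrib)
    then have "u * (min (s\<^sup>2) (u\<^sup>2 * t\<^sup>2) + min (t\<^sup>2) (u\<^sup>2 * s\<^sup>2)) \<le> u * (u\<^sup>2 * t\<^sup>2 + t\<^sup>2)"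
      using assms(3) by (intro mult_left_mono) auto
    also have "\<dots> = (u\<^sup>2 + 1) * ((u * t) * t)" by (simp add: algebra_simps power2_eq_square)
    also have "\<dots> \<le> (u\<^sup>2 + 1) * (s * t)"
      using that by (intro mult_left_mono mult_right_mono) auto
    finally show ?thesis .
  qed
  have "u * (min (s\<^sup>2) (u\<^sup>2 * t\<^sup>2) + min (t\<^sup>2) (u\<^sup>2 * s\<^sup>2)) \<le> (u\<^sup>2 + 1) * (s * t)"
  proof (cases "u * t \<le> s \<or> u * s \<le> t")
    case True
    then show ?thesis
      using dominated[of t s] dominated[of s t] assms by (auto simp: ac_simps)
  next
    case False
    have "u * (min (s\<^sup>2) (u\<^sup>2 * t\<^sup>2) + min (t\<^sup>2) (u\<^sup>2 * s\<^sup>2)) \<le> u * (s\<^sup>2 + t\<^sup>2)"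
      using assms(3) by (intro mult_left_mono) auto
    also have "\<dots> = (u\<^sup>2 + 1) * (s * t) - (u * t - s) * (u * s - t)"
      by (simp add: algebra_simps power2_eq_square)
    also have "\<dots> \<le> (u\<^sup>2 + 1) * (s * t)"
      using False by simp
    finally show ?thesis .
  qed
  then show ?thesis
    using assms by (simp add: field_simps power2_eq_square)
qed

lemma min_add_min_le_cosh_sqrt:
  fixes a b \<epsilon> :: real
  assumes "0 \<le> a" "0 \<le> b"
  shows "min a (exp \<epsilon> * b) + min b (exp \<epsilon> * a) \<le> 2 * cosh (\<epsilon> / 2) * sqrt (a * b)"
proof -
  have "exp \<epsilon> = (exp (\<epsilon> / 2))\<^sup>2" by (simp flip: exp_double)
  moreover have "exp (\<epsilon> / 2) + 1 / exp (\<epsilon> / 2) = 2 * cosh (\<epsilon> / 2)"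
    by (simp add: cosh_field_def exp_minus field_simps)
  ultimately show ?thesis
    using min_add_min_le_mult[of "sqrt a" "sqrt b" "exp (\<epsilon> / 2)"] assms
    by (simp add: real_sqrt_mult)
qed

lemma sinh_le_mult_cosh:
  fixes t :: real
  assumes "0 \<le> t"
  shows "sinh t \<le> t * cosh t"
proof -
  have "0 * cosh 0 - sinh 0 \<le> t * cosh t - sinh t"
  proof (rule DERIV_nonneg_imp_nondecreasing[OF assms])
    fix x :: real
    assume "0 \<le> x"
    have "((\<lambda>t. t * cosh t - sinh t) has_real_derivative x * sinh x) (at x)"
      by (auto intro!: derivative_eq_intros)
    moreover have "0 \<le> x * sinh x" using \<open>0 \<le> x\<close> by simp
    ultimately show "\<exists>y. ((\<lambda>t. t * cosh t - sinh t) has_real_derivative y) (at x) \<and> y \<ge> 0"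
      by blast
  qed
  then show ?thesis by simp
qed

lemma ln_cosh_le_square_half:
  fixes t :: real
  shows "ln (cosh t) \<le> t\<^sup>2 / 2"
proof -
  have "ln (cosh t) - t\<^sup>2 / 2 \<le> ln (cosh 0) - 0\<^sup>2 / 2" if "0 \<le> t" for t :: real
  proof (rule DERIV_nonpos_imp_nonincreasing[OF that])
    fix x :: real
    assume "0 \<le> x"
    from sinh_le_mult_cosh[OF \<open>0 \<le> x\<close>] have "sinh x / cosh x - x \<le> 0" by (simp add: divide_le_eq)
    moreover have "((\<lambda>t. ln (cosh t) - t\<^sup>2 / 2) has_real_derivative sinh x / cosh x - x) (at x)"
      by (auto intro!: derivative_eq_intros simp: field_simps power2_eq_square)
    ultimately show "\<exists>y. ((\<lambda>t. ln (cosh t) - t\<^sup>2 / 2) has_real_derivative y) (at x) \<and> y \<le> 0"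
      by blast
  qed
  from this[of "\<bar>t\<bar>"] show ?thesis by simp
qed

lemma ln_cosh_le_abs:
  fixes t :: real
  shows "ln (cosh t) \<le> \<bar>t\<bar>"
proof -
  have "cosh t \<le> exp \<bar>t\<bar>"
    using cosh_plus_sinh[of "\<bar>t\<bar>"] by simp
  then show ?thesis
    by (metis cosh_real_pos exp_gt_zero ln_exp ln_le_cancel_iff)
qed

lemma ln_inverse_one_minus_le:
  fixes x :: real
  assumes "x < 1"
  shows "ln (1 / (1 - x)) \<le> x / (1 - x)"
proof -
  have "ln (1 / (1 - x)) \<le> 1 / (1 - x) - 1" using assms by (intro ln_le_minus_one) simp
  also have "\<dots> = x / (1 - x)" using assms by (simp add: field_simps)
  finally show ?thesis .
qed

lemma measure_density_eq_set_integral: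
  fixes p :: "'a \<Rightarrow> real"
  assumes [measurable]: "p \<in> borel_measurable M" "Y \<in> sets M"
    and "\<And>x. x \<in> space M \<Longrightarrow> 0 \<le> p x"
  shows "measure (density M p) Y = (\<integral>x\<in>Y. p x \<partial>M)"
proof -
  have "measure (density M p) Y = enn2real (\<integral>\<^sup>+x. ennreal (p x) * indicator Y x \<partial>M)"
    by (simp add: measure_def emeasure_density)
  also have "\<dots> = (\<integral>x. indicator Y x * p x \<partial>M)"
    using assms(3) by (intro enn2real_nn_integral_eq_integral) (auto split: split_indicator)
  finally show ?thesis by (simp add: set_lebesgue_integral_def)
qed

lemma prob_space_density_integral:
  fixes p :: "'a \<Rightarrow> real"
  assumes [measurable]: "p \<in> borel_measurable M"
    and "\<And>x. x \<in> space M \<Longrightarrow> 0 \<le> p x"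
    and "prob_space (density M p)"
  shows "integrable M p" "(\<integral>x. p x \<partial>M) = 1"
proof -
  have "(\<integral>\<^sup>+x. ennreal (p x) \<partial>M) = (\<integral>\<^sup>+x. ennreal (p x) * indicator (space M) x \<partial>M)"
    by (intro nn_integral_cong) simp
  also have "\<dots> = emeasure (density M p) (space M)"
    by (simp add: emeasure_density)
  also have "\<dots> = 1"
    using prob_space.emeasure_space_1[OF assms(3)] by simp
  finally have nn: "(\<integral>\<^sup>+x. ennreal (p x) \<partial>M) = ennreal 1" by simp
  have nonneg: "AE x in M. 0 \<le> p x" using assms(2) by (intro AE_I2)
  show "integrable M p"
    by (rule integrableI_nn_integral_finite[OF _ nonneg nn]) simp
  then have "ennreal (\<integral>x. p x \<partial>M) = ennreal 1"
    using nonneg nn by (simp add: nn_integral_eq_integral)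
  then show "(\<integral>x. p x \<partial>M) = 1"
    using nonneg by (simp add: integral_nonneg_AE)
qed

lemma integral_min_ge:
  fixes p q :: "'a \<Rightarrow> real"
  assumes [measurable]: "integrable M p" "integrable M q"
    and le: "\<And>Y. Y \<in> sets M \<Longrightarrow> (\<integral>x\<in>Y. p x \<partial>M) \<le> c * (\<integral>x\<in>Y. q x \<partial>M) + \<delta>"
  shows "(\<integral>x. p x \<partial>M) - \<delta> \<le> (\<integral>x. min (p x) (c * q x) \<partial>M)"
proof -
  define Y where "Y = {x \<in> space M. c * q x < p x}"
  have [measurable]: "Y \<in> sets M" unfolding Y_def by measurable
  have "set_integrable M Y p" "set_integrable M Y q"
    unfolding set_integrable_def
    using integrable_mult_indicator[of Y M p] integrable_mult_indicator[of Y M q] assms by simp_all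
  then have excess: "(\<integral>x\<in>Y. p x - c * q x \<partial>M) \<le> \<delta>"
    using le[of Y] by simp
  have "(\<integral>x. min (p x) (c * q x) \<partial>M) = (\<integral>x. p x - indicator Y x *\<^sub>R (p x - c * q x) \<partial>M)"
    by (intro Bochner_Integration.integral_cong) (auto simp: Y_def split: split_indicator)
  also have "\<dots> = (\<integral>x. p x \<partial>M) - (\<integral>x\<in>Y. p x - c * q x \<partial>M)"
  proof -
    have "integrable M (\<lambda>x. indicator Y x * (p x - c * q x))"
      using integrable_mult_indicator[of Y M "\<lambda>x. p x - c * q x"] assms by simp
    then show ?thesis
      unfolding set_lebesgue_integral_def by (simp add: Bochner_Integration.integral_diff[OF assms(1)])
  qed
  finally show ?thesis using excess by simp
qed

lemma bhatt_coeff_ge_indist: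
  fixes p q :: "'a \<Rightarrow> real"
  assumes [measurable]: "p \<in> borel_measurable M" "q \<in> borel_measurable M"
    and p_nonneg: "\<And>x. x \<in> space M \<Longrightarrow> 0 \<le> p x" and q_nonneg: "\<And>x. x \<in> space M \<Longrightarrow> 0 \<le> q x"
    and "prob_space (density M p)" "prob_space (density M q)"
    and "indist \<epsilon> \<delta> (density M p) (density M q)"
  shows "(1 - \<delta>) / cosh (\<epsilon> / 2) \<le> bhatt_coeff M p q"
proof -
  note p_density = prob_space_density_integral[OF assms(1) p_nonneg assms(5)]
  note q_density = prob_space_density_integral[OF assms(2) q_nonneg assms(6)]
  have "(\<integral>x\<in>Y. p x \<partial>M) \<le> exp \<epsilon> * (\<integral>x\<in>Y. q x \<partial>M) + \<delta>"
    "(\<integral>x\<in>Y. q x \<partial>M) \<le> exp \<epsilon> * (\<integral>x\<in>Y. p x \<partial>M) + \<delta>" if "Y \<in> sets M" for Y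
    using assms(7) that p_nonneg q_nonneg
    by (simp_all add: indist_def measure_density_eq_set_integral)
  then have "2 * (1 - \<delta>) \<le> (\<integral>x. min (p x) (exp \<epsilon> * q x) \<partial>M) + (\<integral>x. min (q x) (exp \<epsilon> * p x) \<partial>M)"
    using integral_min_ge[of M p q "exp \<epsilon>" \<delta>] integral_min_ge[of M q p "exp \<epsilon>" \<delta>]
      p_density q_density
    by simp
  also have "\<dots> = (\<integral>x. min (p x) (exp \<epsilon> * q x) + min (q x) (exp \<epsilon> * p x) \<partial>M)"
    using p_density q_density by simp
  also have "\<dots> \<le> (\<integral>x. 2 * cosh (\<epsilon> / 2) * sqrt (p x * q x) \<partial>M)"
  proof (rule integral_mono)
    have "integrable M (\<lambda>x. sqrt (p x * q x))"
    proof (rule Bochner_Integration.integrable_bound)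
      show "integrable M (\<lambda>x. (p x + q x) / 2)" using p_density q_density by simp
      show "AE x in M. norm (sqrt (p x * q x)) \<le> norm ((p x + q x) / 2)"
      proof (rule AE_I2)
        fix x
        assume "x \<in> space M"
        then show "norm (sqrt (p x * q x)) \<le> norm ((p x + q x) / 2)"
          using arith_geo_mean_sqrt[of "p x" "q x"] p_nonneg q_nonneg by simp
      qed
    qed simp
    then show "integrable M (\<lambda>x. 2 * cosh (\<epsilon> / 2) * sqrt (p x * q x))" by simp
    show "integrable M (\<lambda>x. min (p x) (exp \<epsilon> * q x) + min (q x) (exp \<epsilon> * p x))"
      using p_density q_density by simp
    show "min (p x) (exp \<epsilon> * q x) + min (q x) (exp \<epsilon> * p x) \<le> 2 * cosh (\<epsilon> / 2) * sqrt (p x * q x)"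
      if "x \<in> space M" for x
      using min_add_min_le_cosh_sqrt p_nonneg[OF that] q_nonneg[OF that] by blast
  qed
  also have "\<dots> = 2 * cosh (\<epsilon> / 2) * bhatt_coeff M p q"
    by (simp add: bhatt_coeff_def)
  finally show ?thesis
    by (simp add: divide_le_eq mult.commute)
qed

lemma bhatt_dist_le_indist:
  fixes p q :: "'a \<Rightarrow> real"
  assumes "p \<in> borel_measurable M" "q \<in> borel_measurable M"
    and "\<And>x. x \<in> space M \<Longrightarrow> 0 \<le> p x" "\<And>x. x \<in> space M \<Longrightarrow> 0 \<le> q x"
    and "prob_space (density M p)" "prob_space (density M q)"
    and "indist \<epsilon> \<delta> (density M p) (density M q)"
    and "\<delta> < 1"
  shows "bhatt_dist M p q \<le> ln (cosh (\<epsilon> / 2)) + ln (1 / (1 - \<delta>))"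
proof -
  have pos: "0 < (1 - \<delta>) / cosh (\<epsilon> / 2)" using \<open>\<delta> < 1\<close> by simp
  have "(1 - \<delta>) / cosh (\<epsilon> / 2) \<le> bhatt_coeff M p q"
    by (rule bhatt_coeff_ge_indist[OF assms(1-7)])
  then have "ln ((1 - \<delta>) / cosh (\<epsilon> / 2)) \<le> ln (bhatt_coeff M p q)"
    using pos by simp
  then show ?thesis
    using pos \<open>\<delta> < 1\<close> by (simp add: bhatt_dist_def ln_div)
qed

theorem lemma5p3:
  fixes M :: "'a measure" and p q :: "'a \<Rightarrow> real" and \<epsilon> \<delta> :: real
  assumes "\<epsilon> > 0" and "0 \<le> \<delta>" and "\<delta> < 1"
    and "p \<in> borel_measurable M" and "q \<in> borel_measurable M"
    and "\<And>x. x \<in> space M \<Longrightarrow> 0 \<le> p x" and "\<And>x. x \<in> space M \<Longrightarrow> 0 \<le> q x"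
    and "prob_space (density M (\<lambda>x. ennreal (p x)))"
    and "prob_space (density M (\<lambda>x. ennreal (q x)))"
    and "indist \<epsilon> \<delta> (density M (\<lambda>x. ennreal (p x))) (density M (\<lambda>x. ennreal (q x)))"
  shows "bhatt_dist M p q \<le> ln ((exp (\<epsilon>/2) + exp (-\<epsilon>/2)) / 2) + ln (1 / (1 - \<delta>))
       \<and> ln ((exp (\<epsilon>/2) + exp (-\<epsilon>/2)) / 2) + ln (1 / (1 - \<delta>))
           \<le> min (\<epsilon>\<^sup>2 / 8) (\<epsilon> / 2) + \<delta> / (1 - \<delta>)"
proof -
  have cosh_eq: "(exp (\<epsilon>/2) + exp (-\<epsilon>/2)) / 2 = cosh (\<epsilon> / 2)"
    by (simp add: cosh_field_def)
  have "ln (cosh (\<epsilon> / 2)) \<le> min (\<epsilon>\<^sup>2 / 8) (\<epsilon> / 2)"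
    using ln_cosh_le_square_half[of "\<epsilon> / 2"] ln_cosh_le_abs[of "\<epsilon> / 2"] \<open>\<epsilon> > 0\<close>
    by (simp add: power_divide)
  moreover have "ln (1 / (1 - \<delta>)) \<le> \<delta> / (1 - \<delta>)"
    using ln_inverse_one_minus_le \<open>\<delta> < 1\<close> .
  ultimately show ?thesis
    unfolding cosh_eq using bhatt_dist_le_indist[OF assms(4-10,3)] add_mono by blast
qed

end
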